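(* Assume $|V|\ge2$ and that there is $\kappa_0>0$ with $\overline\kappa(x,y)\ge\kappa_0$ for all $x,y\in V$, $x\ne y$. Then $\mathrm{diam}(H)\le 2/\kappa_0$.
   Context: Let $H=(V,E,w)$ be a weighted hypergraph: $V$ is a finite set, $E$ a set of nonempty subsets of $V$, $w\colon E\to\mathbb{R}_{>0}$. Write $x\sim y$ if some $e\in E$ contains both; $H$ is assumed connected. The degree is $d_x=\sum_{e\ni x}w_e>0$, $D=\mathrm{diag}(d_x)$. The distance $d(x,y)$ is the minimal $n$ with a chain $x=z_0\sim\cdots\sim z_n=y$, and $\mathrm{diam}(H)=\max_{x,y}d(x,y)$. $\delta_x$ is the indicator of $x$. $\mathbb{R}^V$ carries the inner product $\langle f,g\rangle=\sum_x f(x)g(x)/d_x$ with norm $\|\cdot\|$. For $e\in E$ let $B_e=\mathrm{Conv}\{\delta_x-\delta_y : x,y\in e\}$. The multivalued hypergraph Laplacian is $L(f)=\{\sum_{e}w_e\mathtt{b}_e(\mathtt{b}_e^\top f) : \mathtt{b}_e\in\operatorname{argmax}_{\mathtt b\in B_e}\mathtt b^\top f\}$ and the normalized Laplacian is $\mathcal{L}f=L(D^{-1}f)$, a maximal monotone operator on $(\mathbb{R}^V,\langle\cdot,\cdot\rangle)$. For $\lambda>0$ the resolvent $J_\lambda=(I+\lambda\mathcal L)^{-1}$ is a single-valued map $\mathbb{R}^V\to\mathbb{R}^V$ (equivalently $J_\lambda f=\operatorname{argmin}_g\{\frac{1}{2\lambda}\|f-g\|^2+Q(D^{-1}g)\}$,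 $Q(g)=\frac12\sum_e w_e\max_{x,y\in e}(g(x)-g(y))^2$). A function $f$ is weighted $1$-Lipschitz if $|f(x)/d_x-f(y)/d_y|\le d(x,y)$ for all $x,y$; $\mathrm{Lip}^1_w(V)$ denotes the set of such functions. $\mathrm{KD}_\lambda(x,y)=\sup\{\langle J_\lambda f,\delta_x-\delta_y\rangle : f\in\mathrm{Lip}^1_w(V)\}$. For $x\ne y$: $\kappa_\lambda(x,y)=1-\mathrm{KD}_\lambda(x,y)/d(x,y)$ and $\overline\kappa(x,y)=\limsup_{\lambda\downarrow0}\kappa_\lambda(x,y)/\lambda$. *)

theory Defs
  imports "HOL-Analysis.Analysis"
begin

text \<open>Weighted hypergraph on a finite vertex type 'a (V = UNIV), edges E, weights w.
  Functions on V are vectors in real^'a; the indicator of x is axis x 1.\<close>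

definition hadj :: "'a set set \<Rightarrow> 'a \<Rightarrow> 'a \<Rightarrow> bool" where
  "hadj E x y \<longleftrightarrow> (\<exists>e\<in>E. x \<in> e \<and> y \<in> e)"

definition hchain :: "'a set set \<Rightarrow> 'a \<Rightarrow> 'a \<Rightarrow> nat \<Rightarrow> bool" where
  "hchain E x y n \<longleftrightarrow> (\<exists>p::nat \<Rightarrow> 'a. p 0 = x \<and> p n = y \<and> (\<forall>i<n. hadj E (p i) (p (Suc i))))"

definition hconnected :: "'a set set \<Rightarrow> bool" where
  "hconnected E \<longleftrightarrow> (\<forall>x y. \<exists>n. hchain E x y n)"

definition hdist :: "'a set set \<Rightarrow> 'a \<Rightarrow> 'a \<Rightarrow> nat" where
  "hdist E x y = (LEAST n. hchain E x y n)"

definition hdiam :: "('a::finite) set set \<Rightarrow> nat" where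
  "hdiam E = Max {hdist E x y | x y. True}"

definition hdeg :: "'a set set \<Rightarrow> ('a set \<Rightarrow> real) \<Rightarrow> 'a \<Rightarrow> real" where
  "hdeg E w x = (\<Sum>e\<in>{e\<in>E. x \<in> e}. w e)"

definition Bset :: "('a::finite) set \<Rightarrow> (real^'a) set" where
  "Bset e = convex hull {axis x 1 - axis y 1 | x y. x \<in> e \<and> y \<in> e}"

definition hLap :: "('a::finite) set set \<Rightarrow> ('a set \<Rightarrow> real) \<Rightarrow> real^'a \<Rightarrow> (real^'a) set" where
  "hLap E w f = {(\<Sum>e\<in>E. (w e * (b e \<bullet> f)) *\<^sub>R b e) | b.
      \<forall>e\<in>E. b e \<in> Bset e \<and> (\<forall>c\<in>Bset e. c \<bullet> f \<le> b e \<bullet> f)}"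

definition nLap :: "('a::finite) set set \<Rightarrow> ('a set \<Rightarrow> real) \<Rightarrow> real^'a \<Rightarrow> (real^'a) set" where
  "nLap E w f = hLap E w (\<chi> x. f $ x / hdeg E w x)"

text \<open>Resolvent J_lambda = (I + lambda nLap)^{-1}: J f is the g with f \<in> g + lambda nLap g.\<close>
definition resolv :: "('a::finite) set set \<Rightarrow> ('a set \<Rightarrow> real) \<Rightarrow> real \<Rightarrow> real^'a \<Rightarrow> real^'a" where
  "resolv E w lam f = (THE g. (1 / lam) *\<^sub>R (f - g) \<in> nLap E w g)"

definition winner :: "('a::finite) set set \<Rightarrow> ('a set \<Rightarrow> real) \<Rightarrow> real^'a \<Rightarrow> real^'a \<Rightarrow> real" where
  "winner E w f g = (\<Sum>x\<in>UNIV. f $ x * g $ x / hdeg E w x)"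

definition wLip1 :: "('a::finite) set set \<Rightarrow> ('a set \<Rightarrow> real) \<Rightarrow> real^'a \<Rightarrow> bool" where
  "wLip1 E w f \<longleftrightarrow> (\<forall>x y. \<bar>f $ x / hdeg E w x - f $ y / hdeg E w y\<bar> \<le> real (hdist E x y))"

definition KD :: "('a::finite) set set \<Rightarrow> ('a set \<Rightarrow> real) \<Rightarrow> real \<Rightarrow> 'a \<Rightarrow> 'a \<Rightarrow> real" where
  "KD E w lam x y = Sup ((\<lambda>f. winner E w (resolv E w lam f) (axis x 1 - axis y 1)) ` {f. wLip1 E w f})"

definition kappa :: "('a::finite) set set \<Rightarrow> ('a set \<Rightarrow> real) \<Rightarrow> real \<Rightarrow> 'a \<Rightarrow> 'a \<Rightarrow> real" where
  "kappa E w lam x y = 1 - KD E w lam x y / real (hdist E x y)"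

definition kappa_bar :: "('a::finite) set set \<Rightarrow> ('a set \<Rightarrow> real) \<Rightarrow> 'a \<Rightarrow> 'a \<Rightarrow> ereal" where
  "kappa_bar E w x y = Limsup (at_right 0) (\<lambda>lam. ereal (kappa E w lam x y / lam))"

end

theory Submission
  imports Defs
begin

(* Let x, y realise the diameter D = dist(x, y). The weighted 1-Lipschitz function
   f(z) = -d_z dist(x, z) tests KD_lambda(x, y): write J_lambda f = f - lambda v. Then v lies in
   the Laplacian of a function whose oscillation on every edge is at most 1 + 2 lambda V, where
   V = max_z |v_z| / d_z, so |v_z| <= (1 + 2 lambda V) d_z and hence V <= 1 / (1 - 2 lambda).
   This gives KD_lambda(x, y) >= D - 2 lambda / (1 - 2 lambda), so kappa_lambda(x, y) / lambda
   is at most 2 / ((1 - 2 lambda) D), and kappa_bar(x, y) <= 2 / D.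
   Most of the work is to show that J_lambda f is well defined: it exists because the
   resolvent energy has a minimiser, whose first-order optimality condition produces, by a
   separating hyperplane, maximising elements b_e of the sets B_e; it is unique because the
   Laplacian is monotone. *)

lemma hchain_refl: "hchain E x x 0"
  unfolding hchain_def by (rule exI[of _ "\<lambda>_. x"]) simp

lemma hchain_edge: "e \<in> E \<Longrightarrow> x \<in> e \<Longrightarrow> y \<in> e \<Longrightarrow> hchain E x y 1"
  unfolding hchain_def hadj_def
  by (rule exI[of _ "\<lambda>i. if i = 0 then x else y"]) auto

lemma hchain_append:
  assumes "hchain E x y n" "hchain E y z m"
  shows "hchain E x z (n + m)"
proof -
  obtain p where p: "p 0 = x" "p n = y" "\<forall>i<n. hadj E (p i) (p (Suc i))"
    using assms(1) unfolding hchain_def by blast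
  obtain q where q: "q 0 = y" "q m = z" "\<forall>i<m. hadj E (q i) (q (Suc i))"
    using assms(2) unfolding hchain_def by blast
  define r where "r i = (if i \<le> n then p i else q (i - n))" for i
  have "hadj E (r i) (r (Suc i))" if "i < n + m" for i
  proof (cases "i < n")
    case True
    then show ?thesis using p(3) by (auto simp: r_def)
  next
    case False
    then have "i - n < m" "Suc i - n = Suc (i - n)" using that by auto
    then show ?thesis using q(3) False p(2) q(1) by (auto simp: r_def)
  qed
  moreover have "r 0 = x" "r (n + m) = z" using p q by (auto simp: r_def)
  ultimately show ?thesis unfolding hchain_def by blast
qed

lemma hchain_reverse:
  assumes "hchain E x y n"
  shows "hchain E y x n"
proof -
  obtain p where p: "p 0 = x" "p n = y" "\<forall>i<n. hadj E (p i) (p (Suc i))"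
    using assms unfolding hchain_def by blast
  have "hadj E (p (n - i)) (p (n - Suc i))" if "i < n" for i
  proof -
    have "n - i = Suc (n - Suc i)" using that by auto
    then show ?thesis using p(3)[rule_format, of "n - Suc i"] that unfolding hadj_def by auto
  qed
  then show ?thesis unfolding hchain_def using p(1,2) by (intro exI[of _ "\<lambda>i. p (n - i)"]) auto
qed

lemma hdist_hchain: "hconnected E \<Longrightarrow> hchain E x y (hdist E x y)"
  unfolding hdist_def hconnected_def by (meson LeastI_ex)

lemma hdist_le_hchain: "hchain E x y n \<Longrightarrow> hdist E x y \<le> n"
  unfolding hdist_def by (rule Least_le)

lemma hdist_self [simp]: "hdist E x x = 0"
  using hdist_le_hchain[OF hchain_refl] by simp

lemma hdist_edge_le_1: "e \<in> E \<Longrightarrow> x \<in> e \<Longrightarrow> y \<in> e \<Longrightarrow> hdist E x y \<le> 1"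
  by (rule hdist_le_hchain[OF hchain_edge])

lemma hdist_commute: "hconnected E \<Longrightarrow> hdist E x y = hdist E y x"
  by (meson antisym hchain_reverse hdist_hchain hdist_le_hchain)

lemma hdist_triangle: "hconnected E \<Longrightarrow> hdist E x z \<le> hdist E x y + hdist E y z"
  by (meson hchain_append hdist_hchain hdist_le_hchain)

lemma hdiam_attained:
  obtains x y where "hdiam E = hdist E x y"
proof -
  have "finite {hdist E x y | x y. True}"
    by (rule finite_subset[of _ "(\<lambda>(x, y). hdist E x y) ` UNIV"]) auto
  then have "hdiam E \<in> {hdist E x y | x y. True}"
    unfolding hdiam_def by (intro Max_in) auto
  then show ?thesis using that by blast
qed

lemma hdeg_eq_sum: "hdeg E w z = (\<Sum>e\<in>E. w e * (if z \<in> e then 1 else 0))"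
  if "finite E"
  using that unfolding hdeg_def by (simp add: sum.inter_filter[symmetric] if_distrib cong: if_cong)

lemma winner_axis_diff:
  "winner E w g (axis x 1 - axis y 1) = g$x / hdeg E w x - g$y / hdeg E w y"
proof -
  have "winner E w g (axis x 1 - axis y 1) =
      (\<Sum>z\<in>UNIV. if z = x then g$x / hdeg E w x else 0) - (\<Sum>z\<in>UNIV. if z = y then g$y / hdeg E w y else 0)"
    unfolding winner_def sum_subtractf[symmetric] by (intro sum.cong refl) (auto simp: axis_def)
  then show ?thesis by simp
qed

lemma wLip1_neg_hdist:
  assumes "hconnected E" "\<forall>z. 0 < hdeg E w z"
  shows "wLip1 E w (\<chi> z. - (hdeg E w z * real (hdist E x z)))"
proof -
  have "\<bar>real (hdist E x b) - real (hdist E x a)\<bar> \<le> real (hdist E a b)" for a b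
    using hdist_triangle[OF assms(1), of x a b] hdist_triangle[OF assms(1), of x b a]
      hdist_commute[OF assms(1), of a b] by linarith
  then show ?thesis
    unfolding wLip1_def using assms(2) by (simp add: less_imp_neq[symmetric])
qed

lemma Bset_inner_le:
  fixes h :: "real^'a::finite"
  assumes "b \<in> Bset e" "\<And>x y. x \<in> e \<Longrightarrow> y \<in> e \<Longrightarrow> h$x - h$y \<le> M"
  shows "b \<bullet> h \<le> M"
proof -
  have "{axis x 1 - axis y 1 | x y. x \<in> e \<and> y \<in> e} \<subseteq> {b. h \<bullet> b \<le> M}"
    using assms(2) by (auto simp: inner_diff_right inner_axis)
  then have "Bset e \<subseteq> {b. h \<bullet> b \<le> M}"
    unfolding Bset_def by (intro hull_minimal convex_halfspace_le)
  then show ?thesis using assms(1) by (auto simp: inner_commute)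
qed

lemma zero_in_Bset: "e \<noteq> {} \<Longrightarrow> (0::real^'a::finite) \<in> Bset e"
  unfolding Bset_def by (rule hull_inc) auto

lemma Bset_component_bound:
  fixes b :: "real^'a::finite"
  assumes "b \<in> Bset e"
  shows "\<bar>b$z\<bar> \<le> (if z \<in> e then 1 else 0)"
proof -
  let ?C = "{b::real^'a. \<bar>b$z\<bar> \<le> (if z \<in> e then 1 else 0)}"
  have "?C = (\<lambda>b. b$z) -` {- (if z \<in> e then 1 else 0) .. if z \<in> e then 1 else 0}"
    by auto
  then have "convex ?C"
    by (metis convex_linear_vimage convex_real_interval(5) bounded_linear_vec_nth bounded_linear.linear)
  moreover have "{axis x 1 - axis y 1 | x y. x \<in> e \<and> y \<in> e} \<subseteq> ?C"
    by (auto simp: axis_def)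
  ultimately have "Bset e \<subseteq> ?C"
    unfolding Bset_def by (intro hull_minimal)
  then show ?thesis using assms by auto
qed

definition osc :: "'a set \<Rightarrow> real^'a::finite \<Rightarrow> real" where
  "osc e h = Max ((\<lambda>(x, y). h$x - h$y) ` (e \<times> e))"

lemma osc_ge: "x \<in> e \<Longrightarrow> y \<in> e \<Longrightarrow> h$x - h$y \<le> osc e h"
  unfolding osc_def by (rule Max_ge) force+

lemma osc_le: "e \<noteq> {} \<Longrightarrow> (\<And>x y. x \<in> e \<Longrightarrow> y \<in> e \<Longrightarrow> h$x - h$y \<le> M) \<Longrightarrow> osc e h \<le> M"
  unfolding osc_def by (subst Max_le_iff) auto

lemma osc_nonneg: "e \<noteq> {} \<Longrightarrow> 0 \<le> osc e h"
  using osc_ge[of _ e _ h] by fastforce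

lemma osc_attained:
  assumes "e \<noteq> {}"
  obtains x y where "x \<in> e" "y \<in> e" "h$x - h$y = osc e h"
proof -
  have "osc e h \<in> (\<lambda>(x, y). h$x - h$y) ` (e \<times> e)"
    unfolding osc_def using assms by (intro Max_in) auto
  then show ?thesis using that by force
qed

lemma Bset_inner_le_osc: "b \<in> Bset e \<Longrightarrow> b \<bullet> h \<le> osc e h"
  by (rule Bset_inner_le) (auto intro: osc_ge)

lemma continuous_on_Max_finite:
  fixes F :: "'i \<Rightarrow> 'b::topological_space \<Rightarrow> real"
  assumes "finite I" "I \<noteq> {}" "\<And>i. i \<in> I \<Longrightarrow> continuous_on S (F i)"
  shows "continuous_on S (\<lambda>x. Max ((\<lambda>i. F i x) ` I))"
  using assms
proof (induction I rule: finite_ne_induct)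
  case (insert i I)
  have "(\<lambda>x. Max ((\<lambda>i. F i x) ` insert i I)) = (\<lambda>x. max (F i x) (Max ((\<lambda>i. F i x) ` I)))"
    using insert by (auto simp: Max_insert)
  then show ?case using insert by (auto intro!: continuous_on_max)
qed simp

lemma continuous_on_osc [continuous_intros]:
  assumes "continuous_on S g"
  shows "continuous_on S (\<lambda>x. osc e (g x))"
proof (cases "e = {}")
  case False
  have "osc e (g x) = Max ((\<lambda>p. g x$fst p - g x$snd p) ` (e \<times> e))" for x
    unfolding osc_def by (simp add: case_prod_beta)
  then show ?thesis
    using False assms by (auto intro!: continuous_on_Max_finite continuous_intros)
qed (simp add: osc_def)

lemma nLap_iff:
  "v \<in> nLap E w g \<longleftrightarrow> (\<exists>b. v = (\<Sum>e\<in>E. (w e * (b e \<bullet> (\<chi> x. g$x / hdeg E w x))) *\<^sub>R b e) \<and>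
      (\<forall>e\<in>E. b e \<in> Bset e \<and> (\<forall>c\<in>Bset e. c \<bullet> (\<chi> x. g$x / hdeg E w x) \<le> b e \<bullet> (\<chi> x. g$x / hdeg E w x))))"
  unfolding nLap_def hLap_def by auto

lemma hLap_monotone:
  assumes ne: "\<forall>e\<in>E. e \<noteq> {}" and wnn: "\<forall>e\<in>E. 0 \<le> w e"
    and v1: "v1 \<in> hLap E w h1" and v2: "v2 \<in> hLap E w h2"
  shows "0 \<le> (v1 - v2) \<bullet> (h1 - h2)"
proof -
  obtain b1 where b1: "v1 = (\<Sum>e\<in>E. (w e * (b1 e \<bullet> h1)) *\<^sub>R b1 e)"
    "\<forall>e\<in>E. b1 e \<in> Bset e \<and> (\<forall>c\<in>Bset e. c \<bullet> h1 \<le> b1 e \<bullet> h1)" using v1 unfolding hLap_def by blast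
  obtain b2 where b2: "v2 = (\<Sum>e\<in>E. (w e * (b2 e \<bullet> h2)) *\<^sub>R b2 e)"
    "\<forall>e\<in>E. b2 e \<in> Bset e \<and> (\<forall>c\<in>Bset e. c \<bullet> h2 \<le> b2 e \<bullet> h2)" using v2 unfolding hLap_def by blast
  have "(v1 - v2) \<bullet> (h1 - h2) = (\<Sum>e\<in>E. w e * (b1 e \<bullet> h1) * (b1 e \<bullet> (h1 - h2))
      - w e * (b2 e \<bullet> h2) * (b2 e \<bullet> (h1 - h2)))"
    unfolding b1(1) b2(1) inner_diff_left inner_sum_left sum_subtractf by simp
  also have "\<dots> \<ge> 0"
  proof (intro sum_nonneg)
    fix e assume e: "e \<in> E"
    define m1 m2 where "m1 = b1 e \<bullet> h1" and "m2 = b2 e \<bullet> h2"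
    have "0 \<in> Bset e" using ne e by (simp add: zero_in_Bset)
    then have "0 \<le> m1" "b2 e \<bullet> h1 \<le> m1" "0 \<le> m2" "b1 e \<bullet> h2 \<le> m2"
      using b1(2) b2(2) e unfolding m1_def m2_def by fastforce+
    then have "m1 * (b1 e \<bullet> h2) \<le> m1 * m2" "m2 * (b2 e \<bullet> h1) \<le> m2 * m1"
      by (simp_all add: mult_left_mono)
    moreover have "0 \<le> (m1 - m2)^2" by simp
    ultimately have "0 \<le> m1 * (b1 e \<bullet> (h1 - h2)) - m2 * (b2 e \<bullet> (h1 - h2))"
      unfolding inner_diff_right m1_def[symmetric] m2_def[symmetric]
      by (simp add: algebra_simps power2_eq_square)
    then show "0 \<le> w e * (b1 e \<bullet> h1) * (b1 e \<bullet> (h1 - h2)) - w e * (b2 e \<bullet> h2) * (b2 e \<bullet> (h1 - h2))"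
      using wnn e unfolding m1_def m2_def by (simp add: mult.assoc flip: right_diff_distrib)
  qed
  finally show ?thesis .
qed

lemma hLap_component_bound:
  fixes E :: "('a::finite) set set"
  assumes ne: "\<forall>e\<in>E. e \<noteq> {}" and wnn: "\<forall>e\<in>E. 0 \<le> w e"
    and v: "v \<in> hLap E w h" and osc_le: "\<forall>e\<in>E. osc e h \<le> M"
  shows "\<bar>v$z\<bar> \<le> M * hdeg E w z"
proof -
  obtain b where b: "v = (\<Sum>e\<in>E. (w e * (b e \<bullet> h)) *\<^sub>R b e)"
    "\<forall>e\<in>E. b e \<in> Bset e \<and> (\<forall>c\<in>Bset e. c \<bullet> h \<le> b e \<bullet> h)" using v unfolding hLap_def by blast
  have "\<bar>v$z\<bar> \<le> (\<Sum>e\<in>E. \<bar>w e * (b e \<bullet> h) * b e $ z\<bar>)"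
    unfolding b(1) by (simp add: sum_abs)
  also have "\<dots> \<le> (\<Sum>e\<in>E. M * (w e * (if z \<in> e then 1 else 0)))"
  proof (rule sum_mono)
    fix e assume e: "e \<in> E"
    have "0 \<le> b e \<bullet> h" using b(2) e zero_in_Bset[of e] ne by force
    moreover have "b e \<bullet> h \<le> M" using b(2) e osc_le Bset_inner_le_osc by (meson order_trans)
    moreover have "\<bar>b e $ z\<bar> \<le> (if z \<in> e then 1 else 0)" using Bset_component_bound b(2) e by blast
    ultimately have "(b e \<bullet> h) * \<bar>b e $ z\<bar> \<le> M * (if z \<in> e then 1 else 0)"
      by (intro mult_mono) auto
    then have "w e * ((b e \<bullet> h) * \<bar>b e $ z\<bar>) \<le> w e * (M * (if z \<in> e then 1 else 0))"
      using wnn e by (intro mult_left_mono) auto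
    then show "\<bar>w e * (b e \<bullet> h) * b e $ z\<bar> \<le> M * (w e * (if z \<in> e then 1 else 0))"
      using wnn e \<open>0 \<le> b e \<bullet> h\<close> by (simp add: abs_mult mult_ac)
  qed
  also have "\<dots> = M * hdeg E w z"
    by (simp add: hdeg_eq_sum sum_distrib_left)
  finally show ?thesis .
qed

lemma convex_sum_convex_hulls:
  fixes g :: "'v::real_vector" and A :: "'i \<Rightarrow> 'v set"
  shows "convex ((\<lambda>b. g + (\<Sum>i\<in>I. c i *\<^sub>R b i)) ` {b. \<forall>i\<in>I. b i \<in> convex hull (A i)})"
proof -
  define p where "p b = g + (\<Sum>i\<in>I. c i *\<^sub>R b i)" for b
  define B where "B = {b. \<forall>i\<in>I. b i \<in> convex hull (A i)}"
  have "s *\<^sub>R x + t *\<^sub>R y \<in> p ` B"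
    if x: "x \<in> p ` B" and y: "y \<in> p ` B" and st: "0 \<le> s" "0 \<le> t" "s + t = 1" for x y s t
  proof -
    obtain b1 b2 where b1: "x = p b1" "b1 \<in> B" and b2: "y = p b2" "b2 \<in> B"
      using x y by blast
    have "s *\<^sub>R x + t *\<^sub>R y = (s + t) *\<^sub>R g + (\<Sum>i\<in>I. c i *\<^sub>R (s *\<^sub>R b1 i + t *\<^sub>R b2 i))"
      unfolding b1 b2 p_def
      by (simp add: scaleR_add_right scaleR_add_left scaleR_sum_right sum.distrib algebra_simps)
    then have "s *\<^sub>R x + t *\<^sub>R y = p (\<lambda>i. s *\<^sub>R b1 i + t *\<^sub>R b2 i)"
      using st unfolding p_def by simp
    moreover have "(\<lambda>i. s *\<^sub>R b1 i + t *\<^sub>R b2 i) \<in> B"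
      using b1 b2 st unfolding B_def by (auto intro: convexD[OF convex_convex_hull])
    ultimately show ?thesis by blast
  qed
  then have "convex (p ` B)" unfolding convex_def by blast
  then show ?thesis unfolding p_def B_def .
qed

(* Otherwise a hyperplane separates 0 from the sums g + (SUM i. c i v i) with v i in A i, and
   choosing each v i maximal against its normal contradicts the hypothesis. *)
lemma zero_in_sum_convex_hulls:
  fixes g :: "'v::euclidean_space" and A :: "'i \<Rightarrow> 'v set"
  assumes "finite I" and A: "\<And>i. i \<in> I \<Longrightarrow> finite (A i) \<and> A i \<noteq> {}"
    and support: "\<And>u. 0 \<le> g \<bullet> u + (\<Sum>i\<in>I. c i * Max ((\<lambda>a. a \<bullet> u) ` A i))"
  obtains b where "\<forall>i\<in>I. b i \<in> convex hull (A i)" "g + (\<Sum>i\<in>I. c i *\<^sub>R b i) = 0"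
proof -
  define p where "p b = g + (\<Sum>i\<in>I. c i *\<^sub>R b i)" for b
  define K where "K = p ` {b. \<forall>i\<in>I. b i \<in> convex hull (A i)}"
  define P where "P = p ` PiE I A"
  have "P \<subseteq> K" unfolding P_def K_def by (auto intro: hull_inc)
  then have hull_P: "convex hull P \<subseteq> K"
    unfolding K_def p_def by (intro hull_minimal convex_sum_convex_hulls)
  have "0 \<in> convex hull P"
  proof (rule ccontr)
    assume "0 \<notin> convex hull P"
    moreover have "finite P" unfolding P_def using assms by (intro finite_imageI finite_PiE) auto
    ultimately obtain a r where "0 < r" and sep: "\<forall>x\<in>convex hull P. r < a \<bullet> x"
      using separating_hyperplane_closed_0[OF convex_convex_hull
          compact_imp_closed[OF finite_imp_compact_convex_hull]] by blast
    define u where "u = - a"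
    have "\<forall>i\<in>I. \<exists>v\<in>A i. v \<bullet> u = Max ((\<lambda>b. b \<bullet> u) ` A i)"
      using A by (metis (no_types, lifting) Max_in finite_imageI image_iff image_is_empty)
    then obtain v where v: "\<forall>i\<in>I. v i \<in> A i \<and> v i \<bullet> u = Max ((\<lambda>b. b \<bullet> u) ` A i)"
      by metis
    have "p (restrict v I) \<in> convex hull P"
      using v unfolding P_def by (intro hull_inc imageI) auto
    then have "r < a \<bullet> p (restrict v I)" using sep by blast
    moreover have "p (restrict v I) \<bullet> u = g \<bullet> u + (\<Sum>i\<in>I. c i * Max ((\<lambda>b. b \<bullet> u) ` A i))"
      unfolding p_def using v by (simp add: inner_add_left inner_sum_left)
    moreover have "a \<bullet> p (restrict v I) = - (p (restrict v I) \<bullet> u)"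
      by (simp add: u_def inner_commute)
    ultimately show False using support[of u] \<open>0 < r\<close> by linarith
  qed
  then obtain b where "\<forall>i\<in>I. b i \<in> convex hull (A i)" "p b = 0"
    using hull_P unfolding K_def by auto
  then show ?thesis using that unfolding p_def by blast
qed

(* With g = D h this is lambda times the functional |f - g|^2 / (2 lambda) + Q(D^-1 g) minimised
   by J_lambda f, since osc e h is the maximum of b . h over b in B_e. *)
definition resolvent_energy ::
    "('a \<Rightarrow> real) \<Rightarrow> 'a set set \<Rightarrow> ('a set \<Rightarrow> real) \<Rightarrow> real \<Rightarrow> real^'a \<Rightarrow> real^'a::finite \<Rightarrow> real" where
  "resolvent_energy d E w lam f h =
     (\<Sum>z\<in>UNIV. (f$z - d z * h$z)^2 / (2 * d z)) + lam * (\<Sum>e\<in>E. w e * (osc e h)^2 / 2)"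

lemma resolvent_energy_component_bound:
  assumes dpos: "\<forall>z. 0 < d z" and wnn: "\<forall>e\<in>E. 0 \<le> w e" and "0 \<le> lam"
    and le: "resolvent_energy d E w lam f h \<le> c"
  shows "\<bar>h$z\<bar> \<le> (\<bar>f$z\<bar> + sqrt (2 * d z * c)) / d z"
proof -
  have "0 \<le> lam * (\<Sum>e\<in>E. w e * (osc e h)^2 / 2)"
    using assms by (intro mult_nonneg_nonneg sum_nonneg) auto
  moreover have "(f$z - d z * h$z)^2 / (2 * d z) \<le> (\<Sum>z\<in>UNIV. (f$z - d z * h$z)^2 / (2 * d z))"
    using dpos by (intro member_le_sum) (auto intro: divide_nonneg_pos)
  ultimately have "(f$z - d z * h$z)^2 / (2 * d z) \<le> c"
    using le unfolding resolvent_energy_def by linarith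
  then have "(f$z - d z * h$z)^2 \<le> 2 * d z * c"
    using dpos[rule_format, of z] by (simp add: field_simps)
  then have "\<bar>f$z - d z * h$z\<bar> \<le> sqrt (2 * d z * c)"
    using real_sqrt_le_mono by fastforce
  then have "d z * \<bar>h$z\<bar> \<le> \<bar>f$z\<bar> + sqrt (2 * d z * c)"
    using dpos[rule_format, of z] by (simp add: abs_mult)
  then show ?thesis
    using dpos[rule_format, of z] by (simp add: le_divide_eq mult.commute)
qed

lemma resolvent_energy_has_minimizer:
  assumes dpos: "\<forall>z. 0 < d z" and wnn: "\<forall>e\<in>E. 0 \<le> w e" and "0 \<le> lam"
  obtains h0 where "\<And>h. resolvent_energy d E w lam f h0 \<le> resolvent_energy d E w lam f h"
proof -
  let ?\<Phi> = "resolvent_energy d E w lam f"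
  have cont: "continuous_on UNIV ?\<Phi>"
    unfolding resolvent_energy_def using dpos
    by (intro continuous_intros) (auto simp: less_imp_neq[symmetric])
  define S where "S = {h. ?\<Phi> h \<le> ?\<Phi> 0}"
  have "closed S" unfolding S_def by (rule closed_Collect_le[OF cont]) simp
  moreover have "bounded S"
    unfolding bounded_iff
  proof (intro exI ballI)
    fix h assume "h \<in> S"
    then have "\<bar>h$z\<bar> \<le> (\<bar>f$z\<bar> + sqrt (2 * d z * ?\<Phi> 0)) / d z" for z
      using assms by (intro resolvent_energy_component_bound) (auto simp: S_def)
    then show "norm h \<le> (\<Sum>z\<in>UNIV. (\<bar>f$z\<bar> + sqrt (2 * d z * ?\<Phi> 0)) / d z)"
      using norm_le_l1_cart[of h] by (meson order_trans sum_mono)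
  qed
  ultimately have "compact S" by (simp add: compact_eq_bounded_closed)
  moreover have "0 \<in> S" by (simp add: S_def)
  ultimately obtain h0 where "h0 \<in> S" "\<forall>h\<in>S. ?\<Phi> h0 \<le> ?\<Phi> h"
    using continuous_attains_inf[OF _ _ continuous_on_subset[OF cont]] by blast
  then have "?\<Phi> h0 \<le> ?\<Phi> h" for h
    by (cases "h \<in> S") (auto simp: S_def)
  then show ?thesis using that by blast
qed

(* The convex hull of these vectors is the subdifferential of osc e at h. *)
definition active_diffs :: "'a set \<Rightarrow> real^'a \<Rightarrow> (real^'a::finite) set" where
  "active_diffs e h = {axis x 1 - axis y 1 | x y. x \<in> e \<and> y \<in> e \<and> h$x - h$y = osc e h}"

lemma finite_active_diffs: "finite (active_diffs e h)"
  by (rule finite_subset[of _ "(\<lambda>(x, y). axis x 1 - axis y 1) ` UNIV"]) (auto simp: active_diffs_def)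

lemma active_diffs_nonempty: "e \<noteq> {} \<Longrightarrow> active_diffs e h \<noteq> {}"
  by (rule osc_attained[of e h]) (auto simp: active_diffs_def)

lemma convex_hull_active_diffs:
  assumes "b \<in> convex hull (active_diffs e h)"
  shows "b \<in> Bset e" "b \<bullet> h = osc e h"
proof -
  have "convex hull (active_diffs e h) \<subseteq> Bset e"
    unfolding Bset_def active_diffs_def by (rule hull_mono) blast
  then show "b \<in> Bset e" using assms by auto
  have "active_diffs e h \<subseteq> {b. h \<bullet> b = osc e h}"
    by (auto simp: active_diffs_def inner_diff_right inner_axis)
  then have "convex hull (active_diffs e h) \<subseteq> {b. h \<bullet> b = osc e h}"
    by (intro hull_minimal convex_hyperplane)
  then show "b \<bullet> h = osc e h" using assms by (auto simp: inner_commute)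
qed

lemma osc_eventually_le_along:
  assumes "e \<noteq> {}" and active: "\<forall>b\<in>active_diffs e h. b \<bullet> u \<le> s"
  shows "\<forall>\<^sub>F t in at_right 0. osc e (h + t *\<^sub>R u) \<le> osc e h + t * s"
proof -
  have "\<forall>\<^sub>F t in at_right 0. (h + t *\<^sub>R u)$x - (h + t *\<^sub>R u)$y \<le> osc e h + t * s"
    if "x \<in> e" "y \<in> e" for x y
  proof (cases "h$x - h$y = osc e h")
    case True
    have "axis x 1 - axis y 1 \<in> active_diffs e h"
      using True that by (auto simp: active_diffs_def)
    then have "u$x - u$y \<le> s"
      using active by (force simp: inner_diff_left inner_axis')
    show ?thesis
      using eventually_at_right_less[of 0]
    proof eventually_elim
      case (elim t)
      then have "t * (u$x - u$y) \<le> t * s" using \<open>u$x - u$y \<le> s\<close> by (intro mult_left_mono) auto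
      then show ?case using True by (simp add: algebra_simps)
    qed
  next
    case False
    then have "h$x - h$y < osc e h" using osc_ge[OF that, of h] by linarith
    moreover have "((\<lambda>t. osc e h + t * s - (h$x - h$y + t * (u$x - u$y)))
        \<longlongrightarrow> osc e h - (h$x - h$y)) (at_right 0)"
      by (auto intro!: tendsto_eq_intros)
    ultimately have "\<forall>\<^sub>F t in at_right 0. 0 < osc e h + t * s - (h$x - h$y + t * (u$x - u$y))"
      by (intro order_tendstoD(1)) auto
    then show ?thesis by eventually_elim (simp add: algebra_simps)
  qed
  then have "\<forall>\<^sub>F t in at_right 0. \<forall>p\<in>e \<times> e. (h + t *\<^sub>R u)$fst p - (h + t *\<^sub>R u)$snd p \<le> osc e h + t * s"
    by (intro eventually_ball_finite) auto
  then show ?thesis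
    by eventually_elim (use \<open>e \<noteq> {}\<close> in \<open>auto intro!: osc_le\<close>)
qed

lemma resolvent_energy_le_along:
  assumes dpos: "\<forall>z. 0 < d z" and wnn: "\<forall>e\<in>E. 0 \<le> w e" and "0 \<le> lam"
    and ne: "\<forall>e\<in>E. e \<noteq> {}"
    and osc_le: "\<forall>e\<in>E. osc e (h + t *\<^sub>R u) \<le> osc e h + t * s e"
  shows "resolvent_energy d E w lam f (h + t *\<^sub>R u) \<le> resolvent_energy d E w lam f h
      + t * (((\<chi> z. d z * h$z) - f) \<bullet> u + lam * (\<Sum>e\<in>E. w e * osc e h * s e))
      + t^2 * ((\<Sum>z\<in>UNIV. d z * (u$z)^2) / 2 + lam * (\<Sum>e\<in>E. w e * (s e)^2 / 2))"
proof -
  have fidelity: "(\<Sum>z\<in>UNIV. (f$z - d z * (h + t *\<^sub>R u)$z)^2 / (2 * d z)) =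
      (\<Sum>z\<in>UNIV. (f$z - d z * h$z)^2 / (2 * d z)) + t * (((\<chi> z. d z * h$z) - f) \<bullet> u)
      + t^2 * ((\<Sum>z\<in>UNIV. d z * (u$z)^2) / 2)"
  proof -
    have "(f$z - d z * (h + t *\<^sub>R u)$z)^2 / (2 * d z) = (f$z - d z * h$z)^2 / (2 * d z)
        + t * ((d z * h$z - f$z) * u$z) + t^2 * (d z * (u$z)^2) / 2" for z
      using dpos[rule_format, of z] by (simp add: field_simps power2_eq_square)
    then show ?thesis
      by (simp add: inner_vec_def sum.distrib sum_distrib_left sum_divide_distrib)
  qed
  have "(osc e (h + t *\<^sub>R u))^2 \<le> (osc e h + t * s e)^2" if "e \<in> E" for e
    using osc_le osc_nonneg ne that by (intro power_mono) blast+
  then have "(\<Sum>e\<in>E. w e * (osc e (h + t *\<^sub>R u))^2 / 2) \<le> (\<Sum>e\<in>E. w e * (osc e h + t * s e)^2 / 2)"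
    using wnn by (intro sum_mono divide_right_mono mult_left_mono) auto
  also have "\<dots> = (\<Sum>e\<in>E. w e * (osc e h)^2 / 2) + t * (\<Sum>e\<in>E. w e * osc e h * s e)
      + t^2 * (\<Sum>e\<in>E. w e * (s e)^2 / 2)"
    unfolding sum_distrib_left sum.distrib[symmetric] by (intro sum.cong) (auto simp: power2_eq_square field_simps)
  finally have "lam * (\<Sum>e\<in>E. w e * (osc e (h + t *\<^sub>R u))^2 / 2) \<le> lam * (\<dots>)"
    using \<open>0 \<le> lam\<close> by (rule mult_left_mono)
  then show ?thesis
    unfolding resolvent_energy_def fidelity by (simp add: algebra_simps)
qed

lemma resolvent_energy_minimizer_first_order:
  assumes dpos: "\<forall>z. 0 < d z" and wnn: "\<forall>e\<in>E. 0 \<le> w e" and "0 \<le> lam"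
    and ne: "\<forall>e\<in>E. e \<noteq> {}"
    and min: "\<And>h'. resolvent_energy d E w lam f h \<le> resolvent_energy d E w lam f h'"
  shows "0 \<le> ((\<chi> z. d z * h$z) - f) \<bullet> u
      + (\<Sum>e\<in>E. lam * w e * osc e h * Max ((\<lambda>b. b \<bullet> u) ` active_diffs e h))"
proof (rule ccontr)
  define s where "s e = Max ((\<lambda>b. b \<bullet> u) ` active_diffs e h)" for e
  define \<alpha> where "\<alpha> = ((\<chi> z. d z * h$z) - f) \<bullet> u + lam * (\<Sum>e\<in>E. w e * osc e h * s e)"
  define \<beta> where "\<beta> = (\<Sum>z\<in>UNIV. d z * (u$z)^2) / 2 + lam * (\<Sum>e\<in>E. w e * (s e)^2 / 2)"
  assume "\<not> ?thesis"
  then have "\<alpha> < 0"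
    unfolding \<alpha>_def s_def by (simp add: sum_distrib_left mult.assoc)
  have "\<forall>e\<in>E. \<forall>\<^sub>F t in at_right 0. osc e (h + t *\<^sub>R u) \<le> osc e h + t * s e"
    using ne finite_active_diffs unfolding s_def by (auto intro!: osc_eventually_le_along Max_ge)
  then have "\<forall>\<^sub>F t in at_right 0. \<forall>e\<in>E. osc e (h + t *\<^sub>R u) \<le> osc e h + t * s e"
    by (intro eventually_ball_finite) auto
  moreover have "\<forall>\<^sub>F t in at_right 0. \<alpha> + t * \<beta> < 0"
    using \<open>\<alpha> < 0\<close> by (intro order_tendstoD(2)) (auto intro!: tendsto_eq_intros)
  moreover note eventually_at_right_less[of 0]
  ultimately have "\<forall>\<^sub>F t in at_right 0.
      (\<forall>e\<in>E. osc e (h + t *\<^sub>R u) \<le> osc e h + t * s e) \<and> \<alpha> + t * \<beta> < 0 \<and> 0 < t"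
    by eventually_elim blast
  from eventually_happens'[OF _ this] obtain t :: real where t: "0 < t" "\<alpha> + t * \<beta> < 0"
    and osc_le: "\<forall>e\<in>E. osc e (h + t *\<^sub>R u) \<le> osc e h + t * s e"
    by auto
  have "resolvent_energy d E w lam f (h + t *\<^sub>R u) \<le> resolvent_energy d E w lam f h + t * (\<alpha> + t * \<beta>)"
    using resolvent_energy_le_along[OF assms(1-4) osc_le] unfolding \<alpha>_def \<beta>_def
    by (simp add: algebra_simps power2_eq_square)
  also have "\<dots> < resolvent_energy d E w lam f h"
    using t by (simp add: mult_pos_neg)
  finally show False using min not_le by blast
qed

locale weighted_hypergraph =
  fixes E :: "('a::finite) set set" and w :: "'a set \<Rightarrow> real"
  assumes edges_nonempty: "\<forall>e\<in>E. e \<noteq> {}"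
    and weights_pos: "\<forall>e\<in>E. 0 < w e"
    and degrees_pos: "\<forall>x. 0 < hdeg E w x"
begin

lemma weights_nonneg: "\<forall>e\<in>E. 0 \<le> w e"
  using weights_pos by (simp add: less_imp_le)

lemma resolvent_exists:
  assumes "0 < lam"
  shows "\<exists>g. (1/lam) *\<^sub>R (f - g) \<in> nLap E w g"
proof -
  let ?d = "hdeg E w"
  obtain h where min: "\<And>h'. resolvent_energy ?d E w lam f h \<le> resolvent_energy ?d E w lam f h'"
    using resolvent_energy_has_minimizer[where f = f, OF degrees_pos weights_nonneg less_imp_le[OF \<open>0 < lam\<close>]] by blast
  have first_order: "0 \<le> ((\<chi> z. ?d z * h$z) - f) \<bullet> u
      + (\<Sum>e\<in>E. lam * w e * osc e h * Max ((\<lambda>b. b \<bullet> u) ` active_diffs e h))" for u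
    using \<open>0 < lam\<close>
    by (intro resolvent_energy_minimizer_first_order[OF degrees_pos weights_nonneg _ edges_nonempty min]) simp
  obtain b where b: "\<forall>e\<in>E. b e \<in> convex hull (active_diffs e h)"
    and kkt: "((\<chi> z. ?d z * h$z) - f) + (\<Sum>e\<in>E. (lam * w e * osc e h) *\<^sub>R b e) = 0"
    by (rule zero_in_sum_convex_hulls[OF finite _ first_order])
      (simp add: edges_nonempty finite_active_diffs active_diffs_nonempty)
  define g where "g = (\<chi> z. ?d z * h$z)"
  have h_eq: "(\<chi> x. g$x / ?d x) = h"
    unfolding g_def using degrees_pos by (simp add: vec_eq_iff less_imp_neq[symmetric])
  have "f - g = (\<Sum>e\<in>E. (lam * w e * osc e h) *\<^sub>R b e)"
    using kkt unfolding g_def by (simp add: algebra_simps eq_neg_iff_add_eq_0)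
  then have "(1/lam) *\<^sub>R (f - g) = (\<Sum>e\<in>E. (w e * osc e h) *\<^sub>R b e)"
    using \<open>0 < lam\<close> by (simp add: scaleR_sum_right)
  also have "\<dots> = (\<Sum>e\<in>E. (w e * (b e \<bullet> h)) *\<^sub>R b e)"
    using b by (intro sum.cong) (auto simp: convex_hull_active_diffs)
  finally have "(1/lam) *\<^sub>R (f - g) = (\<Sum>e\<in>E. (w e * (b e \<bullet> h)) *\<^sub>R b e)" .
  moreover have "\<forall>e\<in>E. b e \<in> Bset e \<and> (\<forall>c\<in>Bset e. c \<bullet> h \<le> b e \<bullet> h)"
    using b by (auto simp: convex_hull_active_diffs Bset_inner_le_osc)
  ultimately have "(1/lam) *\<^sub>R (f - g) \<in> nLap E w g"
    unfolding nLap_iff h_eq by blast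
  then show ?thesis by blast
qed

lemma resolvent_unique:
  assumes "0 < lam"
    and g1: "(1/lam) *\<^sub>R (f - g1) \<in> nLap E w g1" and g2: "(1/lam) *\<^sub>R (f - g2) \<in> nLap E w g2"
  shows "g1 = g2"
proof -
  let ?d = "hdeg E w"
  have d_nz: "?d z \<noteq> 0" for z using degrees_pos by (simp add: less_imp_neq[symmetric])
  have "0 \<le> ((1/lam) *\<^sub>R (f - g1) - (1/lam) *\<^sub>R (f - g2)) \<bullet> ((\<chi> x. g1$x / ?d x) - (\<chi> x. g2$x / ?d x))"
    using hLap_monotone[OF edges_nonempty weights_nonneg g1[unfolded nLap_def] g2[unfolded nLap_def]] .
  also have "\<dots> = - (\<Sum>z\<in>UNIV. (g1$z - g2$z)^2 / ?d z) / lam"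
  proof -
    have "(1/lam) *\<^sub>R (f - g1) - (1/lam) *\<^sub>R (f - g2) = (1/lam) *\<^sub>R (g2 - g1)"
      by (simp add: algebra_simps)
    moreover have "1/lam * (g2$z - g1$z) * (g1$z / ?d z - g2$z / ?d z) = - ((g1$z - g2$z)^2 / ?d z) / lam" for z
      using d_nz[of z] by (simp add: field_simps power2_eq_square minus_divide_left)
    ultimately show ?thesis
      unfolding inner_vec_def inner_real_def sum_divide_distrib sum_negf[symmetric] by simp
  qed
  finally have "(\<Sum>z\<in>UNIV. (g1$z - g2$z)^2 / ?d z) \<le> 0"
    using \<open>0 < lam\<close> by (simp add: divide_le_0_iff)
  moreover have "0 \<le> (g1$z - g2$z)^2 / ?d z" for z
    using degrees_pos by (simp add: less_imp_le)
  ultimately have "(g1$z - g2$z)^2 / ?d z = 0" for z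
    by (metis (no_types, lifting) antisym finite sum_nonneg sum_nonneg_eq_0_iff UNIV_I)
  then show ?thesis using d_nz by (simp add: vec_eq_iff)
qed

lemma resolv_inclusion:
  assumes "0 < lam"
  shows "(1/lam) *\<^sub>R (f - resolv E w lam f) \<in> nLap E w (resolv E w lam f)"
  unfolding resolv_def
  by (rule theI') (use resolvent_exists resolvent_unique assms in blast)

lemma osc_Lipschitz_perturbation_le:
  assumes e: "e \<in> E" and lip: "wLip1 E w f" and "0 \<le> lam"
    and V: "\<And>z. \<bar>v$z\<bar> / hdeg E w z \<le> V"
  shows "osc e (\<chi> x. (f - lam *\<^sub>R v)$x / hdeg E w x) \<le> 1 + 2 * lam * V"
proof (rule osc_le)
  let ?d = "hdeg E w"
  show "e \<noteq> {}" using edges_nonempty e by blast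
  fix a c assume ac: "a \<in> e" "c \<in> e"
  have "f$a / ?d a - f$c / ?d c \<le> real (hdist E a c)"
    using lip unfolding wLip1_def by (meson abs_le_D1)
  also have "\<dots> \<le> 1" using hdist_edge_le_1[OF e ac] by simp
  finally have f_le: "f$a / ?d a - f$c / ?d c \<le> 1" .
  have "- v$a / ?d a \<le> \<bar>v$a\<bar> / ?d a" "v$c / ?d c \<le> \<bar>v$c\<bar> / ?d c"
    by (intro divide_right_mono; use degrees_pos in \<open>simp add: less_imp_le\<close>)+
  then have "lam * (v$c / ?d c - v$a / ?d a) \<le> lam * (2 * V)"
    using V[of a] V[of c] \<open>0 \<le> lam\<close> by (intro mult_left_mono) auto
  moreover have "(\<chi> x. (f - lam *\<^sub>R v)$x / ?d x)$a - (\<chi> x. (f - lam *\<^sub>R v)$x / ?d x)$c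
      = (f$a / ?d a - f$c / ?d c) + lam * (v$c / ?d c - v$a / ?d a)"
    by (simp add: diff_divide_distrib algebra_simps)
  ultimately show "(\<chi> x. (f - lam *\<^sub>R v)$x / ?d x)$a - (\<chi> x. (f - lam *\<^sub>R v)$x / ?d x)$c
      \<le> 1 + 2 * lam * V"
    using f_le by linarith
qed

lemma resolv_displacement_bound:
  assumes lam: "0 < lam" "lam < 1/2" and lip: "wLip1 E w f"
  shows "\<bar>((1/lam) *\<^sub>R (f - resolv E w lam f))$z\<bar> \<le> hdeg E w z / (1 - 2 * lam)"
proof -
  let ?d = "hdeg E w"
  define v where "v = (1/lam) *\<^sub>R (f - resolv E w lam f)"
  have resolv_eq: "resolv E w lam f = f - lam *\<^sub>R v" unfolding v_def using lam by simp
  have "v \<in> nLap E w (resolv E w lam f)"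
    using resolv_inclusion[OF lam(1)] unfolding v_def .
  then have v_hLap: "v \<in> hLap E w (\<chi> x. (f - lam *\<^sub>R v)$x / ?d x)"
    unfolding nLap_def resolv_eq .
  define V where "V = Max (range (\<lambda>z. \<bar>v$z\<bar> / ?d z))"
  have V_ge: "\<bar>v$z\<bar> / ?d z \<le> V" for z unfolding V_def by (rule Max_ge) auto
  have "V \<in> range (\<lambda>z. \<bar>v$z\<bar> / ?d z)" unfolding V_def by (rule Max_in) auto
  then obtain z0 where z0: "V = \<bar>v$z0\<bar> / ?d z0" by blast
  have "\<bar>v$z\<bar> \<le> (1 + 2 * lam * V) * ?d z" for z
    using osc_Lipschitz_perturbation_le[OF _ lip _ V_ge] lam
    by (intro hLap_component_bound[OF edges_nonempty weights_nonneg v_hLap]) simp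
  then have "V \<le> 1 + 2 * lam * V"
    using degrees_pos unfolding z0 by (simp add: divide_le_eq)
  then have "V \<le> 1 / (1 - 2 * lam)"
    using lam by (simp add: le_divide_eq algebra_simps)
  then have "?d z * (\<bar>v$z\<bar> / ?d z) \<le> ?d z * (1 / (1 - 2 * lam))"
    using V_ge[of z] degrees_pos by (intro mult_left_mono) (auto simp: less_imp_le)
  then show ?thesis
    unfolding v_def[symmetric] using degrees_pos by (simp add: less_imp_neq[symmetric])
qed

lemma winner_resolv_close:
  assumes lam: "0 < lam" "lam < 1/2" and lip: "wLip1 E w f"
  shows "\<bar>winner E w (resolv E w lam f) (axis x 1 - axis y 1) - (f$x / hdeg E w x - f$y / hdeg E w y)\<bar>
    \<le> 2 * lam / (1 - 2 * lam)"
proof -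
  let ?d = "hdeg E w"
  define v where "v = (1/lam) *\<^sub>R (f - resolv E w lam f)"
  have resolv_eq: "resolv E w lam f = f - lam *\<^sub>R v" unfolding v_def using lam by simp
  have "winner E w (resolv E w lam f) (axis x 1 - axis y 1) - (f$x / ?d x - f$y / ?d y)
      = - lam * (v$x / ?d x - v$y / ?d y)"
    unfolding winner_axis_diff resolv_eq by (simp add: diff_divide_distrib algebra_simps)
  moreover have "\<bar>v$z\<bar> \<le> ?d z / (1 - 2 * lam)" for z
    using resolv_displacement_bound[OF lam lip] unfolding v_def .
  then have "\<bar>v$z / ?d z\<bar> \<le> 1 / (1 - 2 * lam)" for z
    using degrees_pos[rule_format, of z] by (simp add: abs_divide divide_le_eq)
  then have "\<bar>v$x / ?d x\<bar> + \<bar>v$y / ?d y\<bar> \<le> 1 / (1 - 2 * lam) + 1 / (1 - 2 * lam)"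
    by (intro add_mono)
  then have "\<bar>v$x / ?d x - v$y / ?d y\<bar> \<le> 2 / (1 - 2 * lam)"
    using abs_triangle_ineq4[of "v$x / ?d x" "v$y / ?d y"] by simp
  then have "lam * \<bar>v$x / ?d x - v$y / ?d y\<bar> \<le> lam * (2 / (1 - 2 * lam))"
    using lam by (intro mult_left_mono) auto
  ultimately show ?thesis
    using lam by (simp add: abs_mult mult.commute)
qed

lemma KD_lower_bound:
  assumes "hconnected E" and lam: "0 < lam" "lam < 1/2"
  shows "real (hdist E x y) - 2 * lam / (1 - 2 * lam) \<le> KD E w lam x y"
proof -
  let ?d = "hdeg E w" and ?C = "2 * lam / (1 - 2 * lam)"
  let ?F = "\<lambda>f. winner E w (resolv E w lam f) (axis x 1 - axis y 1)"
  have "bdd_above (?F ` {f. wLip1 E w f})"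
  proof (rule bdd_aboveI2)
    fix f assume "f \<in> {f. wLip1 E w f}"
    then have lip: "wLip1 E w f" by simp
    then have "f$x / ?d x - f$y / ?d y \<le> real (hdist E x y)"
      unfolding wLip1_def by (meson abs_le_D1)
    then show "?F f \<le> real (hdist E x y) + ?C"
      using abs_le_D1[OF winner_resolv_close[OF lam lip, of x y]] by linarith
  qed
  moreover define f0 where "f0 = (\<chi> z. - (?d z * real (hdist E x z)))"
  moreover have lip: "wLip1 E w f0"
    unfolding f0_def using wLip1_neg_hdist[OF assms(1) degrees_pos] .
  ultimately have "?F f0 \<le> KD E w lam x y"
    unfolding KD_def by (intro cSup_upper) auto
  moreover have "f0$x / ?d x - f0$y / ?d y = real (hdist E x y)"
    unfolding f0_def using degrees_pos by (simp add: less_imp_neq[symmetric])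
  ultimately show ?thesis
    using abs_le_D2[OF winner_resolv_close[OF lam lip, of x y]] by linarith
qed

lemma kappa_div_le:
  assumes "hconnected E" and lam: "0 < lam" "lam < 1/2" and D: "0 < hdist E x y"
  shows "kappa E w lam x y / lam \<le> 2 / ((1 - 2 * lam) * real (hdist E x y))"
proof -
  let ?D = "real (hdist E x y)"
  have "kappa E w lam x y \<le> 1 - (?D - 2 * lam / (1 - 2 * lam)) / ?D"
    unfolding kappa_def using KD_lower_bound[OF assms(1) lam] D by (simp add: divide_right_mono)
  also have "\<dots> = lam * (2 / ((1 - 2 * lam) * ?D))"
    using lam D by (simp add: field_simps)
  finally show ?thesis
    using lam by (simp add: divide_le_eq mult.commute)
qed

lemma kappa_bar_le:
  assumes "hconnected E" and D: "0 < hdist E x y"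
  shows "kappa_bar E w x y \<le> ereal (2 / real (hdist E x y))"
proof -
  let ?D = "real (hdist E x y)"
  have "\<forall>\<^sub>F lam in at_right 0. ereal (kappa E w lam x y / lam) \<le> ereal (2 / ((1 - 2 * lam) * ?D))"
  proof -
    have "\<forall>\<^sub>F lam in at_right 0. lam < (1/2 :: real)"
      by (rule order_tendstoD(2)[OF tendsto_ident_at]) simp
    then show ?thesis
      using eventually_at_right_less[of "0::real"]
      by eventually_elim (use kappa_div_le[OF assms(1) _ _ D] in auto)
  qed
  then have "kappa_bar E w x y \<le> Limsup (at_right 0) (\<lambda>lam. ereal (2 / ((1 - 2 * lam) * ?D)))"
    unfolding kappa_bar_def by (rule Limsup_mono)
  also have "\<dots> = ereal (2 / ((1 - 2 * 0) * ?D))"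
    using D by (intro lim_imp_Limsup tendsto_ereal) (auto intro!: tendsto_eq_intros)
  finally show ?thesis by simp
qed

end

theorem mainTheorem16:
  fixes E :: "('a::finite) set set" and w :: "'a set \<Rightarrow> real" and \<kappa>0 :: real
  assumes "\<forall>e\<in>E. e \<noteq> {}"
    and "\<forall>e\<in>E. w e > 0"
    and "hconnected E"
    and "\<forall>x. hdeg E w x > 0"
    and "CARD('a) \<ge> 2"
    and "\<kappa>0 > 0"
    and "\<forall>x y. x \<noteq> y \<longrightarrow> kappa_bar E w x y \<ge> ereal \<kappa>0"
  shows "real (hdiam E) \<le> 2 / \<kappa>0"
proof -
  interpret weighted_hypergraph E w
    using assms(1,2,4) by unfold_locales
  obtain x y where diam: "hdiam E = hdist E x y" by (rule hdiam_attained)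
  show ?thesis
  proof (cases "hdist E x y = 0")
    case False
    then have "x \<noteq> y" by auto
    then have "ereal \<kappa>0 \<le> ereal (2 / real (hdist E x y))"
      using assms(7) kappa_bar_le[OF assms(3)] False by (meson order_trans not_gr_zero)
    then show ?thesis
      using assms(6) False diam by (simp add: field_simps)
  qed (use diam assms(6) in simp)
qed

end
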